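(* Let $\alpha>1$ and let $m_0\in\mathrm{BUC}([0,\infty))$ be non-decreasing with $m_0(0)=0$, $M=\sup m_0>0$, and suppose there is $c_0\in(0,\infty)$ with $m_0(\rho)<M$ for $\rho<c_0$ and $m_0(\rho)=M$ for $\rho\ge c_0$ (i.e. $c_0=\max\operatorname{supp}u_0$ for $u_0=(m_0)_\rho$). If $$\limsup_{\rho\to c_0^-}\frac{M-m_0(\rho)}{(c_0-\rho)^{\frac\alpha{\alpha-1}}}<+\infty,$$ then there is a waiting time: there exists $T>0$ such that the viscosity solution $m$ of the mass problem with datum $m_0$ satisfies $m(t,\rho)=M$ for all $\rho\ge c_0$ and all $t\in[0,T)$ (so the support of $u(t,\cdot)=m_\rho(t,\cdot)$ stays in $[0,c_0]$).
   Context: $\mathrm{BUC}$ denotes bounded uniformly continuous functions. The mass problem is $m_t+(m_\rho)_+^\alpha m=0$ ($t,\rho>0$), $m(t,0)=0$, $m(0,\cdot)=m_0$, understood in the viscosity sense: with Fréchet super/subdifferentials $D^\pm$, a continuous $m$ is a subsolution if $p_1+(p_2)_+^\alpha m\le0$ for $(p_1,p_2)\in D^+m(t,\rho)$, $m(0,\cdot)\le m_0$, $m(t,0)\le0$; a supersolution with reversed inequalities and $D^-$; a solution if both. Known facts used as standing background: for $m_0\in\mathrm{BUC}$ non-decreasing with $m_0(0)=0$ there is a unique $\mathrm{BUC}$ viscosity solution, and uniformly continuous sub- and supersolutions are ordered (comparison principle). *)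

theory Defs
  imports "HOL-Analysis.Analysis"
begin

definition closed_quad :: "(real \<times> real) set" where
  "closed_quad = {0..} \<times> {0..}"

definition open_quad :: "(real \<times> real) set" where
  "open_quad = {0<..} \<times> {0<..}"

definition BUC2 :: "(real \<Rightarrow> real \<Rightarrow> real) \<Rightarrow> bool" where
  "BUC2 m \<longleftrightarrow> bounded ((\<lambda>(t, r). m t r) ` closed_quad)
     \<and> uniformly_continuous_on closed_quad (\<lambda>(t, r). m t r)"

definition BUC1 :: "(real \<Rightarrow> real) \<Rightarrow> bool" where
  "BUC1 f \<longleftrightarrow> bounded (f ` {0..}) \<and> uniformly_continuous_on {0..} f"

definition frechet_super :: "(real \<Rightarrow> real \<Rightarrow> real) \<Rightarrow> real \<Rightarrow> real \<Rightarrow> (real \<times> real) set" where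
  "frechet_super m t \<rho> = {(p1, p2). \<forall>\<epsilon>>0. \<exists>\<delta>>0. \<forall>s r. (s, r) \<in> open_quad \<longrightarrow>
       dist (s, r) (t, \<rho>) < \<delta> \<longrightarrow>
       m s r - m t \<rho> - p1 * (s - t) - p2 * (r - \<rho>) \<le> \<epsilon> * dist (s, r) (t, \<rho>)}"

definition frechet_sub :: "(real \<Rightarrow> real \<Rightarrow> real) \<Rightarrow> real \<Rightarrow> real \<Rightarrow> (real \<times> real) set" where
  "frechet_sub m t \<rho> = {(p1, p2). \<forall>\<epsilon>>0. \<exists>\<delta>>0. \<forall>s r. (s, r) \<in> open_quad \<longrightarrow>
       dist (s, r) (t, \<rho>) < \<delta> \<longrightarrow>
       m s r - m t \<rho> - p1 * (s - t) - p2 * (r - \<rho>) \<ge> - \<epsilon> * dist (s, r) (t, \<rho>)}"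

definition ham :: "real \<Rightarrow> real \<Rightarrow> real \<Rightarrow> real" where
  "ham \<alpha> p2 v = (max p2 0) powr \<alpha> * v"

definition visc_subsol :: "real \<Rightarrow> (real \<Rightarrow> real) \<Rightarrow> (real \<Rightarrow> real \<Rightarrow> real) \<Rightarrow> bool" where
  "visc_subsol \<alpha> m0 m \<longleftrightarrow>
     continuous_on closed_quad (\<lambda>(t, r). m t r)
   \<and> (\<forall>t>0. \<forall>\<rho>>0. \<forall>(p1, p2) \<in> frechet_super m t \<rho>. p1 + ham \<alpha> p2 (m t \<rho>) \<le> 0)
   \<and> (\<forall>\<rho>\<ge>0. m 0 \<rho> \<le> m0 \<rho>)
   \<and> (\<forall>t\<ge>0. m t 0 \<le> 0)"

definition visc_supersol :: "real \<Rightarrow> (real \<Rightarrow> real) \<Rightarrow> (real \<Rightarrow> real \<Rightarrow> real) \<Rightarrow> bool" where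
  "visc_supersol \<alpha> m0 m \<longleftrightarrow>
     continuous_on closed_quad (\<lambda>(t, r). m t r)
   \<and> (\<forall>t>0. \<forall>\<rho>>0. \<forall>(p1, p2) \<in> frechet_sub m t \<rho>. p1 + ham \<alpha> p2 (m t \<rho>) \<ge> 0)
   \<and> (\<forall>\<rho>\<ge>0. m 0 \<rho> \<ge> m0 \<rho>)
   \<and> (\<forall>t\<ge>0. m t 0 \<ge> 0)"

definition visc_sol :: "real \<Rightarrow> (real \<Rightarrow> real) \<Rightarrow> (real \<Rightarrow> real \<Rightarrow> real) \<Rightarrow> bool" where
  "visc_sol \<alpha> m0 m \<longleftrightarrow> visc_subsol \<alpha> m0 m \<and> visc_supersol \<alpha> m0 m"

end

theory Submission
  imports Defs
begin

text \<open>
  The solution never exceeds \<open>M\<close>: at a positive maximum of \<open>m - \<delta> t - \<epsilon> \<rho>\<close> the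
  subsolution inequality would read \<open>\<delta> + (\<epsilon>)\<^sub>+\<^sup>\<alpha> m \<le> 0\<close> with \<open>m > 0\<close>.
  For the lower bound, the growth condition at \<open>c\<^sub>0\<close> gives \<open>a\<^sub>0\<close> with
  \<open>m\<^sub>0 \<ge> M - a\<^sub>0 (c\<^sub>0 - \<rho>)\<^sub>+\<^sup>\<beta>\<close>, \<open>\<beta> = \<alpha>/(\<alpha>-1)\<close>. Since \<open>(\<beta> - 1) \<alpha> = \<beta>\<close>, the
  Hamiltonian of \<open>M - a(t) (c\<^sub>0 - \<rho>)\<^sub>+\<^sup>\<beta>\<close> is at most a constant multiple of
  \<open>(c\<^sub>0 - \<rho>)\<^sub>+\<^sup>\<beta>\<close>, so letting \<open>a(t)\<close> grow linearly yields a subsolution on a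
  short time interval. Comparing with the supersolution \<open>m\<close> at a minimum of
  \<open>m - \<Phi>\<close> (with penalisations in \<open>t\<close> and \<open>\<rho>\<close>) gives \<open>m \<ge> M\<close> for \<open>\<rho> \<ge> c\<^sub>0\<close>.
\<close>

lemma frechet_sub_if_touching_below:
  fixes m :: "real \<Rightarrow> real \<Rightarrow> real" and \<phi> :: "real \<times> real \<Rightarrow> real"
  assumes deriv: "(\<phi> has_derivative (\<lambda>(x, y). p1 * x + p2 * y)) (at (t, \<rho>))"
    and "d > 0"
    and touch: "\<And>s r. (s, r) \<in> open_quad \<Longrightarrow> dist (s, r) (t, \<rho>) < d \<Longrightarrow>
                  m t \<rho> - \<phi> (t, \<rho>) \<le> m s r - \<phi> (s, r)"
  shows "(p1, p2) \<in> frechet_sub m t \<rho>"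
  unfolding frechet_sub_def
proof (clarsimp)
  fix e :: real assume "e > 0"
  let ?z = "(t, \<rho>)"
  have "((\<lambda>y. (\<phi> y - \<phi> ?z - (\<lambda>(x, y). p1 * x + p2 * y) (y - ?z)) /\<^sub>R norm (y - ?z)) \<longlongrightarrow> 0) (at ?z)"
    using deriv has_derivative_at_within[of \<phi> _ ?z UNIV] by simp
  then have "\<forall>\<^sub>F y in at ?z. dist ((\<phi> y - \<phi> ?z - (\<lambda>(x, y). p1 * x + p2 * y) (y - ?z)) /\<^sub>R norm (y - ?z)) 0 < e"
    using \<open>e > 0\<close> tendstoD by blast
  then obtain d' where "d' > 0" and small: "\<And>y. y \<noteq> ?z \<Longrightarrow> dist y ?z < d' \<Longrightarrow>
      dist ((\<phi> y - \<phi> ?z - (\<lambda>(x, y). p1 * x + p2 * y) (y - ?z)) /\<^sub>R norm (y - ?z)) 0 < e"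
    unfolding eventually_at by blast
  show "\<exists>\<delta>>0. \<forall>s r. (s, r) \<in> open_quad \<longrightarrow> dist (s, r) ?z < \<delta> \<longrightarrow>
          - (e * dist (s, r) ?z) \<le> m s r - m t \<rho> - p1 * (s - t) - p2 * (r - \<rho>)"
  proof (intro exI[of _ "min d d'"] conjI allI impI)
    fix s r assume sr: "(s, r) \<in> open_quad" "dist (s, r) ?z < min d d'"
    show "- (e * dist (s, r) ?z) \<le> m s r - m t \<rho> - p1 * (s - t) - p2 * (r - \<rho>)"
    proof (cases "(s, r) = ?z")
      case False
      then have "norm ((s, r) - ?z) > 0" by (simp add: zero_prod_def)
      moreover have "\<bar>\<phi> (s, r) - \<phi> ?z - (p1 * (s - t) + p2 * (r - \<rho>))\<bar> / norm ((s, r) - ?z) < e"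
        using small[OF False] sr(2) by (simp add: dist_real_def divide_inverse_commute)
      ultimately have "\<bar>\<phi> (s, r) - \<phi> ?z - (p1 * (s - t) + p2 * (r - \<rho>))\<bar> < e * dist (s, r) ?z"
        by (simp add: dist_norm divide_less_eq)
      with touch[OF sr(1)] sr(2) show ?thesis by auto
    qed simp
  qed (use \<open>d > 0\<close> \<open>d' > 0\<close> in simp)
qed

lemma frechet_super_iff_frechet_sub_uminus:
  "(p1, p2) \<in> frechet_super m t \<rho> \<longleftrightarrow> (- p1, - p2) \<in> frechet_sub (\<lambda>s r. - m s r) t \<rho>"
  by (simp add: frechet_super_def frechet_sub_def algebra_simps)

lemma frechet_super_if_touching_above:
  fixes m :: "real \<Rightarrow> real \<Rightarrow> real" and \<phi> :: "real \<times> real \<Rightarrow> real"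
  assumes deriv: "(\<phi> has_derivative (\<lambda>(x, y). p1 * x + p2 * y)) (at (t, \<rho>))"
    and "d > 0"
    and touch: "\<And>s r. (s, r) \<in> open_quad \<Longrightarrow> dist (s, r) (t, \<rho>) < d \<Longrightarrow>
                  m s r - \<phi> (s, r) \<le> m t \<rho> - \<phi> (t, \<rho>)"
  shows "(p1, p2) \<in> frechet_super m t \<rho>"
proof -
  have "((\<lambda>z. - \<phi> z) has_derivative (\<lambda>(x, y). (- p1) * x + (- p2) * y)) (at (t, \<rho>))"
    using has_derivative_minus[OF deriv] by (simp add: case_prod_beta')
  then have "(- p1, - p2) \<in> frechet_sub (\<lambda>s r. - m s r) t \<rho>"
    by (rule frechet_sub_if_touching_below[OF _ \<open>d > 0\<close>]) (use touch in force)
  then show ?thesis by (simp add: frechet_super_iff_frechet_sub_uminus)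
qed

lemma continuous_attains_sup_off_compact:
  fixes F :: "'a::topological_space \<Rightarrow> real"
  assumes "compact K" "K \<subseteq> S" "continuous_on K F" "z0 \<in> S"
    and off: "\<And>z. z \<in> S \<Longrightarrow> z \<notin> K \<Longrightarrow> F z < F z0"
  obtains z1 where "z1 \<in> K" "\<And>z. z \<in> S \<Longrightarrow> F z \<le> F z1"
proof -
  have "z0 \<in> K" using off[OF \<open>z0 \<in> S\<close>] by blast
  then obtain z1 where "z1 \<in> K" and max: "\<And>z. z \<in> K \<Longrightarrow> F z \<le> F z1"
    using continuous_attains_sup[OF assms(1) _ assms(3)] by blast
  have "F z \<le> F z1" if "z \<in> S" for z
    using max[of z] max[OF \<open>z0 \<in> K\<close>] off[OF that] by (cases "z \<in> K") auto
  with \<open>z1 \<in> K\<close> show thesis by (rule that)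
qed

lemma le_if_le_add_vanishing:
  fixes x y a b :: real
  assumes "a \<ge> 0" "b \<ge> 0" and le: "\<And>\<delta> \<epsilon>. \<delta> > 0 \<Longrightarrow> \<epsilon> > 0 \<Longrightarrow> x \<le> y + \<delta> * a + \<epsilon> * b"
  shows "x \<le> y"
proof (rule field_le_epsilon)
  fix e :: real assume "e > 0"
  have "x \<le> y + e / (2 * (a + 1)) * a + e / (2 * (b + 1)) * b"
    using le[of "e / (2 * (a + 1))" "e / (2 * (b + 1))"] \<open>e > 0\<close> assms(1,2) by simp
  also have "\<dots> \<le> y + e / 2 + e / 2"
    using \<open>e > 0\<close> assms(1,2) by (intro add_mono) (auto simp: field_simps)
  finally show "x \<le> y + e" by simp
qed

lemma BUC2_obtains_bound:
  assumes "BUC2 m"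
  obtains B where "\<And>t r. t \<ge> 0 \<Longrightarrow> r \<ge> 0 \<Longrightarrow> \<bar>m t r\<bar> \<le> B"
proof -
  obtain a where "\<forall>x\<in>(\<lambda>(t, r). m t r) ` closed_quad. norm x \<le> a"
    using assms by (auto simp: BUC2_def bounded_iff)
  then have "\<bar>m t r\<bar> \<le> a" if "t \<ge> 0" "r \<ge> 0" for t r
    using that by (force simp: closed_quad_def)
  then show thesis by (rule that)
qed

lemma continuous_on_uncurry_subset:
  assumes "continuous_on closed_quad (\<lambda>(t, r). m t r)" "K \<subseteq> closed_quad"
  shows "continuous_on K (\<lambda>z. m (fst z) (snd z))"
  using continuous_on_subset[OF assms] by (simp add: case_prod_beta')

subsection \<open>The upper bound\<close>

lemma penalized_neg_off_box:
  fixes v B M \<delta> \<epsilon> t r :: real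
  assumes "\<bar>v\<bar> \<le> B" "0 \<le> M" "\<delta> > 0" "\<epsilon> > 0" "0 \<le> t" "0 \<le> r"
    and far: "t > B / \<delta> + B / \<epsilon> \<or> r > B / \<delta> + B / \<epsilon>"
  shows "v - M - \<delta> * t - \<epsilon> * r < 0"
proof -
  have "0 \<le> B" using assms(1) abs_ge_zero[of v] by linarith
  then have "0 \<le> B / \<delta>" "0 \<le> B / \<epsilon>" "0 \<le> \<delta> * t" "0 \<le> \<epsilon> * r"
    using assms(3-6) by simp_all
  moreover have "B / \<delta> < t \<or> B / \<epsilon> < r" using far calculation(1,2) by linarith
  then have "B < \<delta> * t \<or> B < \<epsilon> * r"
    using \<open>\<delta> > 0\<close> \<open>\<epsilon> > 0\<close> by (simp add: pos_divide_less_eq mult.commute)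
  ultimately show ?thesis using assms(1,2) by linarith
qed

lemma penalized_attains_max:
  fixes m :: "real \<Rightarrow> real \<Rightarrow> real"
  assumes cont: "continuous_on closed_quad (\<lambda>(t, r). m t r)"
    and bound: "\<And>t r. t \<ge> 0 \<Longrightarrow> r \<ge> 0 \<Longrightarrow> \<bar>m t r\<bar> \<le> B"
    and "M \<ge> 0" "\<delta> > 0" "\<epsilon> > 0" "t0 \<ge> 0" "r0 \<ge> 0"
    and exceeds: "M + \<delta> * t0 + \<epsilon> * r0 < m t0 r0"
  obtains t1 r1 where "t1 \<ge> 0" "r1 \<ge> 0"
    "\<And>s r. s \<ge> 0 \<Longrightarrow> r \<ge> 0 \<Longrightarrow> m s r - \<delta> * s - \<epsilon> * r \<le> m t1 r1 - \<delta> * t1 - \<epsilon> * r1"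
proof -
  define F where "F = (\<lambda>z. m (fst z) (snd z) - M - \<delta> * fst z - \<epsilon> * snd z)"
  define R where "R = B / \<delta> + B / \<epsilon>"
  define K where "K = cbox (0, 0) (R, R)"
  have off: "F z < F (t0, r0)" if z_out: "z \<in> closed_quad" "z \<notin> K" for z
  proof -
    obtain t r where z: "z = (t, r)" "t \<ge> 0" "r \<ge> 0" "t > R \<or> r > R"
      using z_out by (cases z) (auto simp: K_def closed_quad_def cbox_Pair_eq)
    with penalized_neg_off_box[OF bound[OF z(2,3)] \<open>M \<ge> 0\<close> \<open>\<delta> > 0\<close> \<open>\<epsilon> > 0\<close> z(2,3)] exceeds
    show ?thesis by (simp add: F_def R_def)
  qed
  have K_sub: "K \<subseteq> closed_quad" by (auto simp: K_def closed_quad_def cbox_Pair_eq)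
  have cont_F: "continuous_on K F"
    unfolding F_def by (intro continuous_intros continuous_on_uncurry_subset cont K_sub)
  have z0: "(t0, r0) \<in> closed_quad" using \<open>t0 \<ge> 0\<close> \<open>r0 \<ge> 0\<close> by (simp add: closed_quad_def)
  obtain z1 where "z1 \<in> K" and max: "\<And>z. z \<in> closed_quad \<Longrightarrow> F z \<le> F z1"
    using continuous_attains_sup_off_compact[OF compact_cbox[of "(0, 0)" "(R, R)", folded K_def] K_sub cont_F z0 off]
    by metis
  moreover obtain t1 r1 where "z1 = (t1, r1)" "t1 \<ge> 0" "r1 \<ge> 0"
    using \<open>z1 \<in> K\<close> by (cases z1) (auto simp: K_def cbox_Pair_eq)
  ultimately show thesis
    using that[of t1 r1] by (force simp: F_def closed_quad_def)
qed

lemma visc_subsol_le_penalized: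
  fixes m :: "real \<Rightarrow> real \<Rightarrow> real"
  assumes sub: "visc_subsol \<alpha> m0 m"
    and m0_le: "\<And>\<rho>. \<rho> \<ge> 0 \<Longrightarrow> m0 \<rho> \<le> M" and "M \<ge> 0"
    and bound: "\<And>t r. t \<ge> 0 \<Longrightarrow> r \<ge> 0 \<Longrightarrow> \<bar>m t r\<bar> \<le> B"
    and "\<delta> > 0" "\<epsilon> > 0" "t0 \<ge> 0" "r0 \<ge> 0"
  shows "m t0 r0 \<le> M + \<delta> * t0 + \<epsilon> * r0"
proof (rule ccontr)
  assume "\<not> m t0 r0 \<le> M + \<delta> * t0 + \<epsilon> * r0"
  then have exceeds: "M + \<delta> * t0 + \<epsilon> * r0 < m t0 r0" by simp
  have cont: "continuous_on closed_quad (\<lambda>(t, r). m t r)" using sub by (simp add: visc_subsol_def)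
  obtain t1 r1 where "t1 \<ge> 0" "r1 \<ge> 0"
    and max: "\<And>s r. s \<ge> 0 \<Longrightarrow> r \<ge> 0 \<Longrightarrow> m s r - \<delta> * s - \<epsilon> * r \<le> m t1 r1 - \<delta> * t1 - \<epsilon> * r1"
    using penalized_attains_max[OF cont bound \<open>M \<ge> 0\<close> \<open>\<delta> > 0\<close> \<open>\<epsilon> > 0\<close> \<open>t0 \<ge> 0\<close> \<open>r0 \<ge> 0\<close> exceeds]
    by blast
  have "M < m t1 r1 - \<delta> * t1 - \<epsilon> * r1"
    using max[OF \<open>t0 \<ge> 0\<close> \<open>r0 \<ge> 0\<close>] exceeds by simp
  moreover have "0 \<le> \<delta> * t1" "0 \<le> \<epsilon> * r1" using \<open>\<delta> > 0\<close> \<open>\<epsilon> > 0\<close> \<open>t1 \<ge> 0\<close> \<open>r1 \<ge> 0\<close> by simp_all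
  ultimately have above: "M < m t1 r1" by linarith
  have "t1 \<noteq> 0" using above sub m0_le[OF \<open>r1 \<ge> 0\<close>] \<open>r1 \<ge> 0\<close> by (force simp: visc_subsol_def)
  moreover have "r1 \<noteq> 0" using above sub \<open>M \<ge> 0\<close> \<open>t1 \<ge> 0\<close> by (force simp: visc_subsol_def)
  moreover have "(\<delta>, \<epsilon>) \<in> frechet_super m t1 r1"
  proof (rule frechet_super_if_touching_above[where \<phi> = "\<lambda>(s, r). \<delta> * s + \<epsilon> * r" and d = 1])
    show "((\<lambda>(s, r). \<delta> * s + \<epsilon> * r) has_derivative (\<lambda>(x, y). \<delta> * x + \<epsilon> * y)) (at (t1, r1))"
      by (simp add: case_prod_beta') (auto intro!: derivative_eq_intros)
  next
    fix s r assume "(s, r) \<in> open_quad"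
    then show "m s r - (case (s, r) of (s, r) \<Rightarrow> \<delta> * s + \<epsilon> * r)
                 \<le> m t1 r1 - (case (t1, r1) of (s, r) \<Rightarrow> \<delta> * s + \<epsilon> * r)"
      using max[of s r] by (simp add: open_quad_def)
  qed simp
  moreover have "\<forall>(p1, p2) \<in> frechet_super m t1 r1. p1 + ham \<alpha> p2 (m t1 r1) \<le> 0"
    using sub \<open>t1 \<ge> 0\<close> \<open>r1 \<ge> 0\<close> calculation(1,2) by (simp add: visc_subsol_def)
  ultimately have "\<delta> + ham \<alpha> \<epsilon> (m t1 r1) \<le> 0" by blast
  moreover have "ham \<alpha> \<epsilon> (m t1 r1) \<ge> 0"
    using above \<open>M \<ge> 0\<close> by (simp add: ham_def)
  ultimately show False using \<open>\<delta> > 0\<close> by linarith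
qed

lemma visc_subsol_le_const:
  fixes m :: "real \<Rightarrow> real \<Rightarrow> real"
  assumes "visc_subsol \<alpha> m0 m"
    and "\<And>\<rho>. \<rho> \<ge> 0 \<Longrightarrow> m0 \<rho> \<le> M" "M \<ge> 0"
    and "\<And>t r. t \<ge> 0 \<Longrightarrow> r \<ge> 0 \<Longrightarrow> \<bar>m t r\<bar> \<le> B"
    and "t \<ge> 0" "r \<ge> 0"
  shows "m t r \<le> M"
  using le_if_le_add_vanishing[OF \<open>t \<ge> 0\<close> \<open>r \<ge> 0\<close>] visc_subsol_le_penalized[OF assms(1-4) _ _ assms(5,6)]
  by blast

subsection \<open>The barrier\<close>

definition trunc_powr :: "real \<Rightarrow> real \<Rightarrow> real \<Rightarrow> real" where
  "trunc_powr c b r = (if r < c then (c - r) powr b else 0)"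

lemma trunc_powr_nonneg: "trunc_powr c b r \<ge> 0"
  by (simp add: trunc_powr_def)

lemma has_real_derivative_trunc_powr:
  assumes "b > 1"
  shows "(trunc_powr c b has_real_derivative - b * trunc_powr c (b - 1) r) (at r)"
proof -
  consider "r < c" | "r > c" | "r = c" by linarith
  then show ?thesis
  proof cases
    case 1
    have "((\<lambda>x. (c - x) powr b) has_real_derivative b * (c - r) powr (b - of_nat 1) * (-1)) (at r)"
      by (rule DERIV_fun_powr) (use 1 in \<open>auto intro!: derivative_eq_intros\<close>)
    then have "((\<lambda>x. (c - x) powr b) has_real_derivative - b * trunc_powr c (b - 1) r) (at r)"
      by (rule DERIV_cong) (use 1 in \<open>simp add: trunc_powr_def\<close>)
    then show ?thesis
      by (rule has_field_derivative_transform_within_open[OF _ open_lessThan[of c]])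
         (use 1 in \<open>auto simp: trunc_powr_def\<close>)
  next
    case 2
    then have "((\<lambda>x. 0) has_real_derivative - b * trunc_powr c (b - 1) r) (at r)"
      by (simp add: trunc_powr_def)
    then show ?thesis
      by (rule has_field_derivative_transform_within_open[OF _ open_greaterThan[of c]])
         (use 2 in \<open>auto simp: trunc_powr_def\<close>)
  next
    case 3
    have "((\<lambda>y. (trunc_powr c b y - trunc_powr c b c) / (y - c)) \<longlongrightarrow> 0) (at c)"
    proof (rule Lim_null_comparison)
      show "\<forall>\<^sub>F x in at c. norm ((trunc_powr c b x - trunc_powr c b c) / (x - c)) \<le> \<bar>x - c\<bar> powr (b - 1)"
      proof (intro always_eventually allI)
        fix x
        show "norm ((trunc_powr c b x - trunc_powr c b c) / (x - c)) \<le> \<bar>x - c\<bar> powr (b - 1)"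
        proof (cases "x < c")
          case True
          then have "(c - x) powr b = (c - x) powr (b - 1) * (c - x)"
            by (simp add: powr_diff)
          with True show ?thesis by (simp add: trunc_powr_def abs_div)
        qed (simp add: trunc_powr_def)
      qed
      have "((\<lambda>x. \<bar>x - c\<bar> powr (b - 1)) \<longlongrightarrow> \<bar>c - c\<bar> powr (b - 1)) (at c)"
        using assms by (intro tendsto_intros) auto
      then show "((\<lambda>x. \<bar>x - c\<bar> powr (b - 1)) \<longlongrightarrow> 0) (at c)" using assms by simp
    qed
    then show ?thesis using 3 by (simp add: has_field_derivative_iff trunc_powr_def)
  qed
qed

definition barrier :: "real \<Rightarrow> real \<Rightarrow> real \<Rightarrow> real \<Rightarrow> real \<Rightarrow> real \<Rightarrow> real \<Rightarrow> real \<Rightarrow> real \<times> real \<Rightarrow> real" where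
  "barrier M \<eta> \<epsilon> a0 K T c b =
     (\<lambda>(t, r). M - \<eta> / (T - t) - \<epsilon> * r - (a0 + K * t) * trunc_powr c b r)"

lemma barrier_le: "0 \<le> a0 \<Longrightarrow> 0 \<le> K \<Longrightarrow> 0 \<le> t \<Longrightarrow>
    barrier M \<eta> \<epsilon> a0 K T c b (t, r) \<le> M - \<eta> / (T - t) - \<epsilon> * r"
  using trunc_powr_nonneg[of c b r] by (simp add: barrier_def)

lemma barrier_le_profile:
  assumes "0 \<le> \<eta>" "0 \<le> \<epsilon>" "t < T" "0 \<le> r"
  shows "barrier M \<eta> \<epsilon> a0 K T c b (t, r) \<le> M - (a0 + K * t) * trunc_powr c b r"
proof -
  have "0 \<le> \<eta> / (T - t)" "0 \<le> \<epsilon> * r" using assms by simp_all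
  then show ?thesis by (simp add: barrier_def)
qed

lemma barrier_has_derivative:
  assumes "b > 1" "t < T"
  shows "(barrier M \<eta> \<epsilon> a0 K T c b has_derivative (\<lambda>(x, y).
            (- (\<eta> / (T - t)\<^sup>2) - K * trunc_powr c b r) * x
          + (- \<epsilon> + (a0 + K * t) * b * trunc_powr c (b - 1) r) * y)) (at (t, r))"
proof -
  have trunc: "((\<lambda>z. trunc_powr c b (snd z)) has_derivative
                 (\<lambda>h. snd h * (- b * trunc_powr c (b - 1) r))) (at (t, r))"
    using DERIV_compose_FDERIV[where f = "trunc_powr c b" and g = snd and x = "(t, r)", simplified,
        OF has_real_derivative_trunc_powr[OF \<open>b > 1\<close>] has_derivative_snd[OF has_derivative_ident]] .
  have "((\<lambda>x. \<eta> / (T - x)) has_real_derivative \<eta> / (T - t)\<^sup>2) (at t)"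
    using \<open>t < T\<close> by (auto intro!: derivative_eq_intros simp: power2_eq_square field_simps)
  from DERIV_compose_FDERIV[where g = fst and x = "(t, r)", simplified,
      OF this has_derivative_fst[OF has_derivative_ident]]
  have blowup: "((\<lambda>z. \<eta> / (T - fst z)) has_derivative (\<lambda>h. fst h * (\<eta> / (T - t)\<^sup>2))) (at (t, r))" .
  have slope: "((\<lambda>z. a0 + K * fst z) has_derivative (\<lambda>h. 0 + K * fst h)) (at (t, r))"
    by (intro has_derivative_add has_derivative_const has_derivative_mult_right
          has_derivative_fst[OF has_derivative_ident])
  have linear: "((\<lambda>z. \<epsilon> * snd z) has_derivative (\<lambda>h. \<epsilon> * snd h)) (at (t, r))"
    by (intro has_derivative_mult_right has_derivative_snd[OF has_derivative_ident])
  show ?thesis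
    unfolding barrier_def case_prod_beta'
    by (rule has_derivative_eq_rhs[OF has_derivative_diff[OF has_derivative_diff[OF
          has_derivative_diff[OF has_derivative_const blowup] linear] has_derivative_mult[OF slope trunc]]])
       (simp add: fun_eq_iff algebra_simps)
qed

lemma ham_barrier_le:
  assumes "\<alpha> > 1" "\<beta> = \<alpha> / (\<alpha> - 1)" "0 \<le> a" "a \<le> A" "\<epsilon> > 0" "v \<le> M" "M \<ge> 0"
  shows "ham \<alpha> (- \<epsilon> + a * \<beta> * trunc_powr c (\<beta> - 1) r) v \<le> (A * \<beta>) powr \<alpha> * M * trunc_powr c \<beta> r"
proof (cases "r < c")
  case False
  then show ?thesis using \<open>\<epsilon> > 0\<close> by (simp add: ham_def trunc_powr_def)
next
  case True
  have "\<beta> > 0" using assms(1,2) by simp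
  define Y where "Y = a * \<beta> * (c - r) powr (\<beta> - 1)"
  have "Y \<ge> 0" using \<open>0 \<le> a\<close> \<open>\<beta> > 0\<close> by (simp add: Y_def)
  have "max (- \<epsilon> + a * \<beta> * trunc_powr c (\<beta> - 1) r) 0 \<le> Y"
    using True \<open>\<epsilon> > 0\<close> \<open>Y \<ge> 0\<close> by (simp add: trunc_powr_def Y_def)
  then have "max (- \<epsilon> + a * \<beta> * trunc_powr c (\<beta> - 1) r) 0 powr \<alpha> \<le> Y powr \<alpha>"
    using \<open>\<alpha> > 1\<close> by (intro powr_mono2) auto
  also have "Y powr \<alpha> = (a * \<beta>) powr \<alpha> * (c - r) powr ((\<beta> - 1) * \<alpha>)"
    using \<open>0 \<le> a\<close> \<open>\<beta> > 0\<close> True by (simp add: Y_def powr_mult powr_powr)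
  \<comment> \<open>This identity is what singles out the exponent \<open>\<beta> = \<alpha>/(\<alpha>-1)\<close>.\<close>
  also have "(\<beta> - 1) * \<alpha> = \<beta>"
    using assms(1,2) by (simp add: field_simps)
  also have "(a * \<beta>) powr \<alpha> * (c - r) powr \<beta> \<le> (A * \<beta>) powr \<alpha> * (c - r) powr \<beta>"
    using assms(1,3,4) \<open>\<beta> > 0\<close> by (intro mult_right_mono powr_mono2) auto
  finally have bound: "max (- \<epsilon> + a * \<beta> * trunc_powr c (\<beta> - 1) r) 0 powr \<alpha>
                         \<le> (A * \<beta>) powr \<alpha> * (c - r) powr \<beta>" .
  have "ham \<alpha> (- \<epsilon> + a * \<beta> * trunc_powr c (\<beta> - 1) r) M \<le> (A * \<beta>) powr \<alpha> * M * trunc_powr c \<beta> r"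
    using mult_right_mono[OF bound \<open>M \<ge> 0\<close>] True by (simp only: ham_def trunc_powr_def if_True mult_ac)
  moreover have "ham \<alpha> p v \<le> ham \<alpha> p M" for p
    using \<open>v \<le> M\<close> by (simp add: ham_def mult_left_mono)
  ultimately show ?thesis by (meson order_trans)
qed

lemma barrier_strict_subsolution:
  assumes "\<alpha> > 1" "\<beta> = \<alpha> / (\<alpha> - 1)" "a0 > 0" "M \<ge> 0"
    and K: "K = (2 * a0 * \<beta>) powr \<alpha> * M" and T: "T = a0 / K"
    and "\<eta> > 0" "\<epsilon> > 0" "0 \<le> t" "t < T" "v \<le> M"
  shows "- (\<eta> / (T - t)\<^sup>2) - K * trunc_powr c \<beta> r
           + ham \<alpha> (- \<epsilon> + (a0 + K * t) * \<beta> * trunc_powr c (\<beta> - 1) r) v < 0"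
proof -
  \<comment> \<open>For \<open>K = 0\<close> the division gives \<open>T = 0\<close>, so no \<open>t\<close> is admissible.\<close>
  have "K \<noteq> 0" using \<open>0 \<le> t\<close> \<open>t < T\<close> T by auto
  moreover have "K \<ge> 0" using K \<open>M \<ge> 0\<close> by simp
  ultimately have "K > 0" by simp
  have "K * t \<le> K * T" using \<open>K > 0\<close> \<open>t < T\<close> by simp
  then have "a0 + K * t \<le> 2 * a0" using \<open>K > 0\<close> T by simp
  then have "ham \<alpha> (- \<epsilon> + (a0 + K * t) * \<beta> * trunc_powr c (\<beta> - 1) r) v
               \<le> (2 * a0 * \<beta>) powr \<alpha> * M * trunc_powr c \<beta> r"
    using \<open>a0 > 0\<close> \<open>K > 0\<close> \<open>0 \<le> t\<close>
    by (intro ham_barrier_le[OF assms(1,2) _ _ \<open>\<epsilon> > 0\<close> \<open>v \<le> M\<close> \<open>M \<ge> 0\<close>]) simp_all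
  then have "ham \<alpha> (- \<epsilon> + (a0 + K * t) * \<beta> * trunc_powr c (\<beta> - 1) r) v \<le> K * trunc_powr c \<beta> r"
    using K by simp
  moreover have "\<eta> / (T - t)\<^sup>2 > 0" using \<open>\<eta> > 0\<close> \<open>t < T\<close> by simp
  ultimately show ?thesis by linarith
qed

lemma barrier_minus_neg_off_box:
  fixes v :: real
  assumes bound: "\<bar>v\<bar> \<le> B" and "0 \<le> M" "0 \<le> a0" "0 \<le> K" "\<eta> > 0" "\<epsilon> > 0" "0 \<le> t" "t < T" "0 \<le> r"
    and far: "t > T - \<eta> / (B + M + 1) \<or> r > (B + M + 1) / \<epsilon>"
  shows "barrier M \<eta> \<epsilon> a0 K T c b (t, r) - v < 0"
proof -
  define C where "C = B + M + 1"
  have "C < \<eta> / (T - t) + \<epsilon> * r"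
  proof (cases "t > T - \<eta> / C")
    case True
    moreover have "C > 0" using bound \<open>0 \<le> M\<close> by (simp add: C_def)
    ultimately have "C * (T - t) < \<eta>" by (simp add: field_simps)
    then have "C < \<eta> / (T - t)" using \<open>t < T\<close> by (simp add: field_simps)
    then show ?thesis using \<open>\<epsilon> > 0\<close> \<open>0 \<le> r\<close> by (smt (verit) mult_nonneg_nonneg)
  next
    case False
    then have "C < \<epsilon> * r" using far \<open>\<epsilon> > 0\<close> by (simp add: C_def field_simps)
    then show ?thesis using \<open>\<eta> > 0\<close> \<open>t < T\<close> by (smt (verit) divide_pos_pos)
  qed
  with barrier_le[OF \<open>0 \<le> a0\<close> \<open>0 \<le> K\<close> \<open>0 \<le> t\<close>, of M \<eta> \<epsilon> T c b r] bound
  show ?thesis by (simp add: C_def)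
qed

lemma barrier_le_initial:
  assumes sup: "visc_supersol \<alpha> m0 m"
    and init: "M - a0 * trunc_powr c b r \<le> m0 r" and "0 \<le> \<eta>" "0 \<le> \<epsilon>" "0 < T" "0 \<le> r"
  shows "barrier M \<eta> \<epsilon> a0 K T c b (0, r) \<le> m 0 r"
proof -
  have "barrier M \<eta> \<epsilon> a0 K T c b (0, r) \<le> M - a0 * trunc_powr c b r"
    using barrier_le_profile[of \<eta> \<epsilon> 0 T r] assms(3-6) by simp
  also have "\<dots> \<le> m 0 r" using init sup \<open>0 \<le> r\<close> by (auto simp: visc_supersol_def)
  finally show ?thesis .
qed

lemma barrier_le_boundary:
  assumes sup: "visc_supersol \<alpha> m0 m"
    and origin: "M \<le> a0 * trunc_powr c b 0" and "0 \<le> \<eta>" "0 \<le> \<epsilon>" "0 \<le> K" "0 \<le> t" "t < T"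
  shows "barrier M \<eta> \<epsilon> a0 K T c b (t, 0) \<le> m t 0"
proof -
  have "a0 * trunc_powr c b 0 \<le> (a0 + K * t) * trunc_powr c b 0"
    using \<open>0 \<le> K\<close> \<open>0 \<le> t\<close> trunc_powr_nonneg[of c b 0] by (simp add: distrib_right)
  moreover have "barrier M \<eta> \<epsilon> a0 K T c b (t, 0) \<le> M - (a0 + K * t) * trunc_powr c b 0"
    using barrier_le_profile[of \<eta> \<epsilon> t T 0] assms(3,4,7) by simp
  moreover have "0 \<le> m t 0" using sup \<open>0 \<le> t\<close> by (simp add: visc_supersol_def)
  ultimately show ?thesis using origin by linarith
qed

lemma barrier_minus_attains_max:
  fixes m :: "real \<Rightarrow> real \<Rightarrow> real"
  assumes cont: "continuous_on closed_quad (\<lambda>(t, r). m t r)"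
    and bound: "\<And>t r. t \<ge> 0 \<Longrightarrow> r \<ge> 0 \<Longrightarrow> \<bar>m t r\<bar> \<le> B"
    and "0 \<le> M" "0 \<le> a0" "0 \<le> K" "b > 1" "\<eta> > 0" "\<epsilon> > 0" "0 \<le> t0" "t0 < T" "0 \<le> r0"
    and below: "m t0 r0 < barrier M \<eta> \<epsilon> a0 K T c b (t0, r0)"
  obtains t1 r1 where "0 \<le> t1" "t1 < T" "0 \<le> r1"
    "\<And>s r. 0 \<le> s \<Longrightarrow> s < T \<Longrightarrow> 0 \<le> r \<Longrightarrow>
       barrier M \<eta> \<epsilon> a0 K T c b (s, r) - m s r \<le> barrier M \<eta> \<epsilon> a0 K T c b (t1, r1) - m t1 r1"
proof -
  define \<Phi> where "\<Phi> = barrier M \<eta> \<epsilon> a0 K T c b"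
  define F where "F = (\<lambda>z. \<Phi> z - m (fst z) (snd z))"
  define S where "S = {0..<T} \<times> {0::real..}"
  define C where "C = B + M + 1"
  define box where "box = cbox (0, 0) (T - \<eta> / C, C / \<epsilon>)"
  have "C > 0" using bound[of 0 0] \<open>0 \<le> M\<close> by (simp add: C_def)
  then have box_sub: "box \<subseteq> S"
    using \<open>\<eta> > 0\<close> by (auto simp: box_def S_def cbox_Pair_eq) (smt (verit) divide_pos_pos)
  have off: "F z < F (t0, r0)" if z_out: "z \<in> S" "z \<notin> box" for z
  proof -
    obtain t r where z: "z = (t, r)" "0 \<le> t" "t < T" "0 \<le> r"
      and far: "t > T - \<eta> / (B + M + 1) \<or> r > (B + M + 1) / \<epsilon>"
      using z_out by (cases z) (auto simp: S_def box_def C_def cbox_Pair_eq)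
    have "F z < 0"
      using barrier_minus_neg_off_box[OF bound[OF z(2,4)] assms(3-5,7,8) z(2,3,4) far]
      by (simp add: F_def \<Phi>_def z(1))
    with below show ?thesis by (simp add: F_def \<Phi>_def)
  qed
  have "continuous_on box \<Phi>"
  proof (intro continuous_at_imp_continuous_on ballI)
    fix z assume "z \<in> box"
    then have "fst z < T" using box_sub by (auto simp: S_def)
    then show "isCont \<Phi> z"
      using has_derivative_continuous[OF barrier_has_derivative[OF \<open>b > 1\<close>, of "fst z" T _ _ _ _ _ _ "snd z"]]
      by (simp add: \<Phi>_def)
  qed
  moreover have "box \<subseteq> closed_quad" using box_sub by (auto simp: S_def closed_quad_def)
  ultimately have cont_F: "continuous_on box F"
    unfolding F_def by (intro continuous_intros continuous_on_uncurry_subset cont)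
  have z0: "(t0, r0) \<in> S" using \<open>0 \<le> t0\<close> \<open>t0 < T\<close> \<open>0 \<le> r0\<close> by (simp add: S_def)
  obtain z1 where "z1 \<in> box" and max: "\<And>z. z \<in> S \<Longrightarrow> F z \<le> F z1"
    using continuous_attains_sup_off_compact[OF compact_cbox[of "(0, 0)" "(T - \<eta> / C, C / \<epsilon>)", folded box_def] box_sub cont_F z0 off]
    by metis
  moreover obtain t1 r1 where "z1 = (t1, r1)" "0 \<le> t1" "t1 < T" "0 \<le> r1"
    using \<open>z1 \<in> box\<close> box_sub by (cases z1) (auto simp: S_def)
  ultimately show thesis
    using that[of t1 r1] by (force simp: F_def \<Phi>_def S_def)
qed

lemma visc_supersol_ge_barrier:
  fixes m :: "real \<Rightarrow> real \<Rightarrow> real"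
  assumes "\<alpha> > 1" "\<beta> = \<alpha> / (\<alpha> - 1)" and sup: "visc_supersol \<alpha> m0 m"
    and bound: "\<And>t r. t \<ge> 0 \<Longrightarrow> r \<ge> 0 \<Longrightarrow> \<bar>m t r\<bar> \<le> B"
    and "M \<ge> 0" "a0 > 0"
    and init: "\<And>r. r \<ge> 0 \<Longrightarrow> M - a0 * trunc_powr c \<beta> r \<le> m0 r"
    and origin: "M \<le> a0 * trunc_powr c \<beta> 0"
    and K: "K = (2 * a0 * \<beta>) powr \<alpha> * M" and T: "T = a0 / K"
    and "\<eta> > 0" "\<epsilon> > 0" "0 \<le> t0" "t0 < T" "0 \<le> r0"
  shows "barrier M \<eta> \<epsilon> a0 K T c \<beta> (t0, r0) \<le> m t0 r0"
proof (rule ccontr)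
  define \<Phi> where "\<Phi> = barrier M \<eta> \<epsilon> a0 K T c \<beta>"
  assume "\<not> barrier M \<eta> \<epsilon> a0 K T c \<beta> (t0, r0) \<le> m t0 r0"
  then have below: "m t0 r0 < \<Phi> (t0, r0)" by (simp add: \<Phi>_def)
  have "\<beta> > 1" using assms(1,2) by simp
  have "K \<ge> 0" using K \<open>M \<ge> 0\<close> by simp
  have cont: "continuous_on closed_quad (\<lambda>(t, r). m t r)" using sup by (simp add: visc_supersol_def)
  obtain t1 r1 where t1: "0 \<le> t1" "t1 < T" and "0 \<le> r1"
    and max: "\<And>s r. 0 \<le> s \<Longrightarrow> s < T \<Longrightarrow> 0 \<le> r \<Longrightarrow> \<Phi> (s, r) - m s r \<le> \<Phi> (t1, r1) - m t1 r1"
    using barrier_minus_attains_max[OF cont bound \<open>M \<ge> 0\<close> less_imp_le[OF \<open>a0 > 0\<close>] \<open>K \<ge> 0\<close> \<open>\<beta> > 1\<close>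
        \<open>\<eta> > 0\<close> \<open>\<epsilon> > 0\<close> \<open>0 \<le> t0\<close> \<open>t0 < T\<close> \<open>0 \<le> r0\<close> below[unfolded \<Phi>_def]]
    unfolding \<Phi>_def by blast
  have m_lt: "m t1 r1 < \<Phi> (t1, r1)" using max[OF \<open>0 \<le> t0\<close> \<open>t0 < T\<close> \<open>0 \<le> r0\<close>] below by simp
  have "t1 \<noteq> 0"
    using barrier_le_initial[OF sup init[OF \<open>0 \<le> r1\<close>], of \<eta> \<epsilon> T K] m_lt \<open>\<eta> > 0\<close> \<open>\<epsilon> > 0\<close> t1 \<open>0 \<le> r1\<close>
    by (auto simp: \<Phi>_def)
  moreover have "r1 \<noteq> 0"
    using barrier_le_boundary[OF sup origin _ _ \<open>K \<ge> 0\<close> t1, of \<eta> \<epsilon>] m_lt \<open>\<eta> > 0\<close> \<open>\<epsilon> > 0\<close>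
    by (auto simp: \<Phi>_def)
  define p1 where "p1 = - (\<eta> / (T - t1)\<^sup>2) - K * trunc_powr c \<beta> r1"
  define p2 where "p2 = - \<epsilon> + (a0 + K * t1) * \<beta> * trunc_powr c (\<beta> - 1) r1"
  have "(p1, p2) \<in> frechet_sub m t1 r1"
  proof (rule frechet_sub_if_touching_below[where \<phi> = \<Phi> and d = "T - t1"])
    show "(\<Phi> has_derivative (\<lambda>(x, y). p1 * x + p2 * y)) (at (t1, r1))"
      unfolding \<Phi>_def p1_def p2_def using barrier_has_derivative[OF \<open>\<beta> > 1\<close> t1(2)] .
  next
    fix s r assume sr: "(s, r) \<in> open_quad" "dist (s, r) (t1, r1) < T - t1"
    have "\<bar>s - t1\<bar> \<le> dist (s, r) (t1, r1)"
      by (metis dist_Pair_Pair dist_real_def real_sqrt_sum_squares_ge1)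
    with sr have "s < T" by linarith
    with sr(1) max[of s r] show "m t1 r1 - \<Phi> (t1, r1) \<le> m s r - \<Phi> (s, r)"
      by (auto simp: open_quad_def)
  qed (use t1 in simp)
  moreover have "\<forall>(p1, p2) \<in> frechet_sub m t1 r1. 0 \<le> p1 + ham \<alpha> p2 (m t1 r1)"
    using sup t1(1) \<open>0 \<le> r1\<close> \<open>t1 \<noteq> 0\<close> \<open>r1 \<noteq> 0\<close> by (simp add: visc_supersol_def)
  ultimately have "0 \<le> p1 + ham \<alpha> p2 (m t1 r1)" by blast
  moreover have "m t1 r1 \<le> M"
  proof -
    have "0 \<le> \<eta> / (T - t1)" "0 \<le> \<epsilon> * r1" using \<open>\<eta> > 0\<close> \<open>\<epsilon> > 0\<close> t1 \<open>0 \<le> r1\<close> by simp_all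
    then show ?thesis
      using m_lt barrier_le[OF less_imp_le[OF \<open>a0 > 0\<close>] \<open>K \<ge> 0\<close> t1(1), of M \<eta> \<epsilon> T c \<beta> r1]
      unfolding \<Phi>_def by linarith
  qed
  ultimately show False
    using barrier_strict_subsolution[OF assms(1,2) \<open>a0 > 0\<close> \<open>M \<ge> 0\<close> K T \<open>\<eta> > 0\<close> \<open>\<epsilon> > 0\<close> t1]
    unfolding p1_def p2_def by (meson not_less)
qed

lemma visc_supersol_ge_top:
  fixes m :: "real \<Rightarrow> real \<Rightarrow> real"
  assumes "\<alpha> > 1" "\<beta> = \<alpha> / (\<alpha> - 1)" and sup: "visc_supersol \<alpha> m0 m"
    and bound: "\<And>t r. t \<ge> 0 \<Longrightarrow> r \<ge> 0 \<Longrightarrow> \<bar>m t r\<bar> \<le> B"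
    and "M \<ge> 0" "a0 > 0"
    and init: "\<And>r. r \<ge> 0 \<Longrightarrow> M - a0 * trunc_powr c \<beta> r \<le> m0 r"
    and origin: "M \<le> a0 * trunc_powr c \<beta> 0"
    and K: "K = (2 * a0 * \<beta>) powr \<alpha> * M" and T: "T = a0 / K"
    and "0 \<le> t" "t < T" "c \<le> \<rho>" "0 \<le> \<rho>"
  shows "M \<le> m t \<rho>"
proof (rule le_if_le_add_vanishing)
  fix \<eta> \<epsilon> :: real assume "\<eta> > 0" "\<epsilon> > 0"
  have "barrier M \<eta> \<epsilon> a0 K T c \<beta> (t, \<rho>) \<le> m t \<rho>"
    using visc_supersol_ge_barrier[OF assms(1-10) \<open>\<eta> > 0\<close> \<open>\<epsilon> > 0\<close> assms(11,12,14)] .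
  then show "M \<le> m t \<rho> + \<eta> * (1 / (T - t)) + \<epsilon> * \<rho>"
    using \<open>c \<le> \<rho>\<close> by (simp add: barrier_def trunc_powr_def)
qed (use \<open>t < T\<close> \<open>0 \<le> \<rho>\<close> in auto)

lemma limsup_obtains_initial_barrier:
  fixes m0 :: "real \<Rightarrow> real"
  assumes "\<beta> > 0" "c > 0" "M > 0"
    and nonneg: "\<And>\<rho>. 0 \<le> \<rho> \<Longrightarrow> 0 \<le> m0 \<rho>"
    and top: "\<And>\<rho>. c \<le> \<rho> \<Longrightarrow> m0 \<rho> = M"
    and limsup: "Limsup (at_left c) (\<lambda>\<rho>. ereal ((M - m0 \<rho>) / (c - \<rho>) powr \<beta>)) < \<infinity>"
  obtains a0 where "a0 > 0" "\<And>r. 0 \<le> r \<Longrightarrow> M - a0 * trunc_powr c \<beta> r \<le> m0 r"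
    "M \<le> a0 * trunc_powr c \<beta> 0"
proof -
  obtain n :: nat where "Limsup (at_left c) (\<lambda>\<rho>. ereal ((M - m0 \<rho>) / (c - \<rho>) powr \<beta>)) < ereal (real n)"
    using limsup less_PInf_Ex_of_nat by (metis less_ereal.simps(4) order_less_imp_not_less)
  then have "\<forall>\<^sub>F \<rho> in at_left c. ereal ((M - m0 \<rho>) / (c - \<rho>) powr \<beta>) < ereal (real n)"
    by (rule Limsup_lessD)
  then obtain b where "b < c" and near: "\<And>y. b < y \<Longrightarrow> y < c \<Longrightarrow> (M - m0 y) / (c - y) powr \<beta> < real n"
    using eventually_at_left[of "c - 1" c] by auto
  define h where "h = min (c - b) c"
  have "0 < h" "h \<le> c" "b \<le> c - h" using \<open>b < c\<close> \<open>c > 0\<close> by (auto simp: h_def)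
  define a0 where "a0 = max (real n) (M / h powr \<beta>)"
  have "a0 > 0" using \<open>M > 0\<close> \<open>0 < h\<close> by (simp add: a0_def less_max_iff_disj)
  have far: "M \<le> a0 * (c - r) powr \<beta>" if "r \<le> c - h" for r
  proof -
    have "M / h powr \<beta> \<le> a0" by (simp add: a0_def)
    then have "M \<le> a0 * h powr \<beta>" using \<open>0 < h\<close> by (simp add: divide_le_eq)
    also have "\<dots> \<le> a0 * (c - r) powr \<beta>"
      using that \<open>0 < h\<close> \<open>\<beta> > 0\<close> \<open>a0 > 0\<close> by (intro mult_left_mono powr_mono2) auto
    finally show ?thesis .
  qed
  have "M - a0 * trunc_powr c \<beta> r \<le> m0 r" if "0 \<le> r" for r
  proof (cases "r < c")
    case True
    then have pos: "(c - r) powr \<beta> > 0" by simp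
    show ?thesis
    proof (cases "r > c - h")
      case near_c: True
      have "M - m0 r < real n * (c - r) powr \<beta>"
        using near[of r] near_c True \<open>b \<le> c - h\<close> pos by (simp add: divide_less_eq)
      also have "\<dots> \<le> a0 * (c - r) powr \<beta>" using pos by (intro mult_right_mono) (auto simp: a0_def)
      finally show ?thesis using True by (simp add: trunc_powr_def)
    next
      case False
      then show ?thesis using far[of r] nonneg[OF that] True by (simp add: trunc_powr_def)
    qed
  qed (simp add: top trunc_powr_def)
  moreover have "M \<le> a0 * trunc_powr c \<beta> 0"
    using far[of 0] \<open>h \<le> c\<close> \<open>c > 0\<close> by (simp add: trunc_powr_def)
  ultimately show thesis using \<open>a0 > 0\<close> that by blast
qed

theorem mainTheorem8:
  fixes \<alpha> M c0 :: real and m0 :: "real \<Rightarrow> real" and m :: "real \<Rightarrow> real \<Rightarrow> real"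
  assumes "\<alpha> > 1"
    and "BUC1 m0"
    and "mono_on {0..} m0"
    and "m0 0 = 0"
    and "M = (SUP \<rho>\<in>{0..}. m0 \<rho>)"
    and "M > 0"
    and "c0 > 0"
    and "\<forall>\<rho>\<in>{0..<c0}. m0 \<rho> < M"
    and "\<forall>\<rho>\<ge>c0. m0 \<rho> = M"
    and "Limsup (at_left c0) (\<lambda>\<rho>. ereal ((M - m0 \<rho>) / (c0 - \<rho>) powr (\<alpha> / (\<alpha> - 1)))) < \<infinity>"
    and "BUC2 m"
    and "visc_sol \<alpha> m0 m"
  shows "\<exists>T>0. \<forall>t\<in>{0..<T}. \<forall>\<rho>\<ge>c0. m t \<rho> = M"
proof -
  define \<beta> where "\<beta> = \<alpha> / (\<alpha> - 1)"
  have sub: "visc_subsol \<alpha> m0 m" and sup: "visc_supersol \<alpha> m0 m"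
    using assms(12) by (auto simp: visc_sol_def)
  obtain B where bound: "\<And>t r. t \<ge> 0 \<Longrightarrow> r \<ge> 0 \<Longrightarrow> \<bar>m t r\<bar> \<le> B"
    using BUC2_obtains_bound[OF assms(11)] by blast
  have m0_nonneg: "0 \<le> m0 \<rho>" if "0 \<le> \<rho>" for \<rho>
    using mono_onD[OF assms(3), of 0 \<rho>] that assms(4) by simp
  have "m0 \<rho> \<le> M" if "0 \<le> \<rho>" for \<rho>
    using assms(8,9) that by (cases "\<rho> < c0") (auto intro: less_imp_le)
  with visc_subsol_le_const[OF sub] bound \<open>M > 0\<close>
  have upper: "m t r \<le> M" if "0 \<le> t" "0 \<le> r" for t r
    using that by (meson less_imp_le)
  obtain a0 where "a0 > 0" and init: "\<And>r. 0 \<le> r \<Longrightarrow> M - a0 * trunc_powr c0 \<beta> r \<le> m0 r"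
    and origin: "M \<le> a0 * trunc_powr c0 \<beta> 0"
    using limsup_obtains_initial_barrier[of \<beta> c0 M m0] assms(1,6,7,9,10) m0_nonneg
    unfolding \<beta>_def by auto
  define K where "K = (2 * a0 * \<beta>) powr \<alpha> * M"
  define T where "T = a0 / K"
  have "T > 0" using \<open>a0 > 0\<close> assms(1,6) by (simp add: T_def K_def \<beta>_def)
  moreover have "m t \<rho> = M" if "0 \<le> t" "t < T" "c0 \<le> \<rho>" for t \<rho>
    using upper visc_supersol_ge_top[OF assms(1) \<beta>_def sup bound _ \<open>a0 > 0\<close> init origin K_def T_def that]
      that assms(6,7) by (simp add: antisym)
  ultimately show ?thesis by auto
qed

end
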